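(* Let $G$ be a finite group, $P$ a $p$-subgroup and $Q$ a $q$-subgroup of $G$ for two different primes $p$ and $q$, and assume $\Pr(P,Q)\ge\epsilon>0$. (1) If $P$ normalizes $Q$ and $p>(2/\epsilon)^{6/\epsilon}$, then $[P,Q]=1$. (2) If $p>(2/\epsilon)^{6/\epsilon}$, then $Q$ has a normal subgroup $Q_0$ such that $|Q:Q_0|\le\lfloor 2/\epsilon\rfloor!$ and $[P,Q_0]=1$.
   Context: For subsets $X,Y$ of a finite group, $\Pr(X,Y)=|\{(x,y)\in X\times Y: xy=yx\}|/(|X||Y|)$. *)

theory Defs
  imports Complex_Main "HOL-Computational_Algebra.Primes" "HOL-Algebra.Coset" "HOL-Algebra.Generated_Groups"
begin

definition commute_prob :: "('a, 'b) monoid_scheme \<Rightarrow> 'a set \<Rightarrow> 'a set \<Rightarrow> real" where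
  "commute_prob G X Y =
     real (card {(x, y). x \<in> X \<and> y \<in> Y \<and> x \<otimes>\<^bsub>G\<^esub> y = y \<otimes>\<^bsub>G\<^esub> x})
       / (real (card X) * real (card Y))"

definition p_subgroup :: "('a, 'b) monoid_scheme \<Rightarrow> nat \<Rightarrow> 'a set \<Rightarrow> bool" where
  "p_subgroup G p P \<longleftrightarrow> subgroup P G \<and> (\<exists>k. card P = p ^ k)"

definition comm_subgroup :: "('a, 'b) monoid_scheme \<Rightarrow> 'a set \<Rightarrow> 'a set \<Rightarrow> 'a set" where
  "comm_subgroup G P Q = generate G
     {x \<otimes>\<^bsub>G\<^esub> y \<otimes>\<^bsub>G\<^esub> inv\<^bsub>G\<^esub> x \<otimes>\<^bsub>G\<^esub> inv\<^bsub>G\<^esub> y | x y. x \<in> P \<and> y \<in> Q}"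

definition normalizes :: "('a, 'b) monoid_scheme \<Rightarrow> 'a set \<Rightarrow> 'a set \<Rightarrow> bool" where
  "normalizes G P Q \<longleftrightarrow> (\<forall>x\<in>P. (x <#\<^bsub>G\<^esub> Q) #>\<^bsub>G\<^esub> inv\<^bsub>G\<^esub> x = Q)"

end

theory Submission
  imports Defs "HOL-Algebra.Group_Action" "HOL-Algebra.Multiplicative_Group"
    "HOL-Combinatorics.Permutations"
begin

text \<open>
  Let \<open>C\<close> be the centralizer of \<open>P\<close> in \<open>Q\<close> and \<open>n = |Q : C|\<close>. Counting commuting pairs by
  their \<open>Q\<close>-coordinate: an element of \<open>Q\<close> outside \<open>C\<close> centralizes a proper subgroup of the
  \<open>p\<close>-group \<open>P\<close>, hence at most \<open>|P|/p\<close> of its elements, so \<open>Pr(P,Q) \<le> 1/n + 1/p\<close>.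

  (2) The kernel of the action of \<open>Q\<close> on the \<open>n\<close> cosets of \<open>C\<close> is a normal subgroup of \<open>Q\<close>
  contained in \<open>C\<close>, of index at most \<open>n!\<close>.

  (1) If \<open>P\<close> normalizes \<open>Q\<close> and a commutator \<open>[x,y]\<close> with \<open>x \<in> P\<close>, \<open>y \<in> Q\<close> lies in \<open>C\<close>, then
  it commutes with \<open>x\<close>, so \<open>[x^i,y] = [x,y]^i\<close>; its order therefore divides both \<open>|P|\<close> and
  \<open>|Q|\<close>, and \<open>[x,y] = 1\<close>. Hence the \<open>P\<close>-conjugacy class of \<open>y \<in> Q\<close> injects into the cosets
  of \<open>C\<close>; its size is a power of \<open>p\<close> smaller than \<open>p\<close>, so it is \<open>{y}\<close>.
\<close>

definition centralizer :: "('a, 'b) monoid_scheme \<Rightarrow> 'a set \<Rightarrow> 'a set \<Rightarrow> 'a set" where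
  "centralizer G X H = {h \<in> H. \<forall>x\<in>X. x \<otimes>\<^bsub>G\<^esub> h = h \<otimes>\<^bsub>G\<^esub> x}"

definition commutator :: "('a, 'b) monoid_scheme \<Rightarrow> 'a \<Rightarrow> 'a \<Rightarrow> 'a" where
  "commutator G x y = x \<otimes>\<^bsub>G\<^esub> y \<otimes>\<^bsub>G\<^esub> inv\<^bsub>G\<^esub> x \<otimes>\<^bsub>G\<^esub> inv\<^bsub>G\<^esub> y"

lemma prime_le_of_dvd_prime_power:
  fixes p d :: nat
  assumes "prime p" "d dvd p ^ k" "d \<noteq> 1"
  shows "p \<le> d"
proof -
  obtain i where "d = p ^ i" using divides_primepow_nat assms(1,2) by blast
  with assms(3) have "i \<noteq> 0" by auto
  with \<open>d = p ^ i\<close> show ?thesis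
    using power_increasing[of 1 i p] prime_ge_1_nat[OF assms(1)] by simp
qed

lemma card_Bij_le_fact:
  assumes "finite S"
  shows "card (Bij S) \<le> fact (card S)"
proof -
  let ?extend = "\<lambda>f x. if x \<in> S then f x else x"
  have inj: "inj_on ?extend (Bij S)"
  proof (rule inj_onI)
    fix f g assume f: "f \<in> Bij S" and g: "g \<in> Bij S" and eq: "?extend f = ?extend g"
    show "f = g"
    proof (rule extensionalityI[OF Bij_imp_extensional[OF f] Bij_imp_extensional[OF g]])
      fix x assume "x \<in> S"
      then show "f x = g x" using fun_cong[OF eq, of x] by simp
    qed
  qed
  have "?extend f permutes S" if f: "f \<in> Bij S" for f
  proof (rule bij_imp_permutes)
    have "bij_betw (?extend f) S S \<longleftrightarrow> bij_betw f S S" by (rule bij_betw_cong) simp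
    then show "bij_betw (?extend f) S S" using f by (simp add: Bij_def)
  qed simp
  then have "?extend ` Bij S \<subseteq> {\<pi>. \<pi> permutes S}" by blast
  then have "card (Bij S) \<le> card {\<pi>. \<pi> permutes S}"
    by (rule card_inj_on_le[OF inj _ finite_permutations[OF assms]])
  then show ?thesis using card_permutations[OF refl assms] by simp
qed

lemma commute_prob_le_one:
  assumes "finite X" "finite Y"
  shows "commute_prob G X Y \<le> 1"
proof -
  have "card {(x, y). x \<in> X \<and> y \<in> Y \<and> x \<otimes>\<^bsub>G\<^esub> y = y \<otimes>\<^bsub>G\<^esub> x} \<le> card (X \<times> Y)"
    using assms by (intro card_mono) auto
  then have "real (card {(x, y). x \<in> X \<and> y \<in> Y \<and> x \<otimes>\<^bsub>G\<^esub> y = y \<otimes>\<^bsub>G\<^esub> x})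
      \<le> real (card X) * real (card Y)"
    by (simp add: card_cartesian_product flip: of_nat_mult)
  then show ?thesis
    unfolding commute_prob_def by (cases "card X = 0 \<or> card Y = 0") (auto simp: divide_le_eq_1)
qed

lemma normalizesD:
  assumes "normalizes G P Q" "x \<in> P" "y \<in> Q"
  shows "x \<otimes>\<^bsub>G\<^esub> y \<otimes>\<^bsub>G\<^esub> inv\<^bsub>G\<^esub> x \<in> Q"
proof -
  have "x \<otimes>\<^bsub>G\<^esub> y \<otimes>\<^bsub>G\<^esub> inv\<^bsub>G\<^esub> x \<in> (x <#\<^bsub>G\<^esub> Q) #>\<^bsub>G\<^esub> inv\<^bsub>G\<^esub> x"
    using assms(3) by (auto simp: l_coset_def r_coset_def)
  then show ?thesis using assms(1,2) by (simp add: normalizes_def)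
qed

context group
begin

lemma inv_mult_cancel_left [simp]:
  "x \<in> carrier G \<Longrightarrow> y \<in> carrier G \<Longrightarrow> inv x \<otimes> (x \<otimes> y) = y"
  by (simp add: m_assoc[symmetric])

lemma mult_inv_cancel_left [simp]:
  "x \<in> carrier G \<Longrightarrow> y \<in> carrier G \<Longrightarrow> x \<otimes> (inv x \<otimes> y) = y"
  by (simp add: m_assoc[symmetric])

lemma commutator_closed [simp]:
  "x \<in> carrier G \<Longrightarrow> y \<in> carrier G \<Longrightarrow> commutator G x y \<in> carrier G"
  by (simp add: commutator_def)

lemma commutator_eq_one_iff:
  assumes "x \<in> carrier G" "y \<in> carrier G"
  shows "commutator G x y = \<one> \<longleftrightarrow> x \<otimes> y = y \<otimes> x"
proof -
  have "commutator G x y = \<one> \<longleftrightarrow> x \<otimes> y \<otimes> inv (y \<otimes> x) = \<one>"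
    using assms by (simp add: commutator_def m_assoc inv_mult_group)
  also have "\<dots> \<longleftrightarrow> x \<otimes> y = y \<otimes> x"
    using assms by (metis inv_closed inv_inv m_closed r_inv inv_equality)
  finally show ?thesis .
qed

lemma commutator_mult_left:
  assumes "x \<in> carrier G" "w \<in> carrier G" "y \<in> carrier G"
  shows "commutator G (x \<otimes> w) y = x \<otimes> commutator G w y \<otimes> inv x \<otimes> commutator G x y"
  using assms by (simp add: commutator_def m_assoc inv_mult_group)

lemma commutator_nat_pow_left:
  assumes x: "x \<in> carrier G" and y: "y \<in> carrier G"
    and comm: "x \<otimes> commutator G x y = commutator G x y \<otimes> x"
  shows "commutator G (x [^] (n::nat)) y = commutator G x y [^] n"
proof (induction n)
  case 0
  then show ?case using y by (simp add: commutator_def m_assoc)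
next
  case (Suc n)
  let ?c = "commutator G x y"
  have "x \<otimes> ?c [^] n = ?c [^] n \<otimes> x"
    using group_commutes_pow[OF comm[symmetric]] x y by simp
  have "commutator G (x [^] Suc n) y = commutator G (x \<otimes> x [^] n) y"
    by (simp only: nat_pow_Suc2[OF x])
  also have "\<dots> = x \<otimes> ?c [^] n \<otimes> inv x \<otimes> ?c"
    using x y by (simp only: commutator_mult_left nat_pow_closed Suc.IH)
  also have "\<dots> = ?c [^] n \<otimes> x \<otimes> inv x \<otimes> ?c"
    by (simp only: \<open>x \<otimes> ?c [^] n = ?c [^] n \<otimes> x\<close>)
  also have "\<dots> = ?c [^] Suc n"
    using x y by (simp add: m_assoc)
  finally show ?case .
qed

lemma subgroup_centralizer:
  assumes "subgroup H G" "X \<subseteq> carrier G"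
  shows "subgroup (centralizer G X H) G"
proof (rule subgroupI)
  interpret H: subgroup H G by fact
  show "centralizer G X H \<subseteq> carrier G"
    by (auto simp: centralizer_def)
  show "centralizer G X H \<noteq> {}"
    using assms(2) by (auto simp: centralizer_def intro!: exI[of _ \<one>])
  fix a b assume a: "a \<in> centralizer G X H" and b: "b \<in> centralizer G X H"
  then have ab: "a \<in> carrier G" "b \<in> carrier G" "a \<in> H" "b \<in> H"
    by (auto simp: centralizer_def)
  show "inv a \<in> centralizer G X H"
  proof -
    have "x \<otimes> inv a = inv a \<otimes> x" if "x \<in> X" for x
    proof -
      have x: "x \<in> carrier G" using that assms(2) by blast
      have xa: "x \<otimes> a = a \<otimes> x" using a that by (simp add: centralizer_def)
      have "x \<otimes> inv a = inv a \<otimes> (a \<otimes> x) \<otimes> inv a"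
        using ab x by (simp add: m_assoc)
      also have "\<dots> = inv a \<otimes> (x \<otimes> a) \<otimes> inv a"
        by (simp only: xa)
      also have "\<dots> = inv a \<otimes> x"
        using ab x by (simp add: m_assoc)
      finally show ?thesis .
    qed
    then show ?thesis using ab by (simp add: centralizer_def)
  qed
  show "a \<otimes> b \<in> centralizer G X H"
  proof -
    have "x \<otimes> (a \<otimes> b) = a \<otimes> b \<otimes> x" if "x \<in> X" for x
    proof -
      have x: "x \<in> carrier G" using that assms(2) by blast
      have "x \<otimes> a = a \<otimes> x" "x \<otimes> b = b \<otimes> x"
        using a b that by (simp_all add: centralizer_def)
      then show ?thesis using ab x by (simp add: m_assoc[symmetric]) (simp add: m_assoc)
    qed
    then show ?thesis using ab by (simp add: centralizer_def)
  qed
qed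

lemma subgroup_centralizer_in:
  assumes "subgroup H G" "X \<subseteq> carrier G"
  shows "subgroup (centralizer G X H) (G\<lparr>carrier := H\<rparr>)"
  using subgroup_incl[OF subgroup_centralizer[OF assms] assms(1)] by (auto simp: centralizer_def)

lemma lagrange_subgroup:
  assumes "subgroup H G" "subgroup K (G\<lparr>carrier := H\<rparr>)"
  shows "card (rcosets\<^bsub>G\<lparr>carrier := H\<rparr>\<^esub> K) * card K = card H"
proof -
  interpret H: group "G\<lparr>carrier := H\<rparr>"
    using subgroup_imp_group[OF assms(1)] .
  show ?thesis using H.lagrange[OF assms(2)] by (simp add: order_def)
qed

lemma pow_card_subgroup_eq_one:
  assumes "subgroup H G" "a \<in> H"
  shows "a [^] card H = \<one>"
proof -
  interpret H: group "G\<lparr>carrier := H\<rparr>"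
    using subgroup_imp_group[OF assms(1)] .
  have "a [^]\<^bsub>G\<lparr>carrier := H\<rparr>\<^esub> order (G\<lparr>carrier := H\<rparr>) = \<one>"
    using H.pow_order_eq_1 assms(2) by simp
  then show ?thesis
    by (simp add: order_def nat_pow_consistent[symmetric])
qed

lemma prime_mult_card_le_of_psubset:
  assumes P: "subgroup P G" and p: "prime p" "card P = p ^ k"
    and S: "subgroup S G" "S \<subset> P"
  shows "p * card S \<le> card P"
proof -
  let ?index = "card (rcosets\<^bsub>G\<lparr>carrier := P\<rparr>\<^esub> S)"
  have lag: "?index * card S = card P"
    by (rule lagrange_subgroup[OF P subgroup_incl[OF S(1) P psubset_imp_subset[OF S(2)]]])
  have "finite P" using p card_ge_0_finite prime_gt_0_nat by (metis zero_less_power)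
  then have "card S < card P" using S(2) psubset_card_mono by blast
  then have "?index \<noteq> 1" using lag by auto
  then have "p \<le> ?index"
    using prime_le_of_dvd_prime_power[OF p(1)] lag p(2) by (metis dvd_triv_left)
  then show ?thesis using lag by (metis mult_le_mono1)
qed

lemma card_commuting_pairs:
  "card {(x, y). x \<in> P \<and> y \<in> Q \<and> x \<otimes> y = y \<otimes> x} = (\<Sum>y\<in>Q. card (centralizer G {y} P))"
  if "finite P" "finite Q"
proof -
  have "{(x, y). x \<in> P \<and> y \<in> Q \<and> x \<otimes> y = y \<otimes> x} = prod.swap ` (SIGMA y:Q. centralizer G {y} P)"
    by (auto simp: centralizer_def image_iff)
  moreover have "finite (centralizer G {y} P)" for y
    using that(1) by (simp add: centralizer_def)
  ultimately show ?thesis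
    using that(2) by (simp add: card_image)
qed

lemma prime_mult_card_centralizer_le:
  assumes P: "subgroup P G" and p: "prime p" "card P = p ^ k" and y: "y \<in> carrier G"
    and x: "x \<in> P" "x \<otimes> y \<noteq> y \<otimes> x"
  shows "p * card (centralizer G {y} P) \<le> card P"
proof (rule prime_mult_card_le_of_psubset[OF P p])
  show "subgroup (centralizer G {y} P) G"
    using y by (intro subgroup_centralizer[OF P]) simp
  have "y \<otimes> x \<noteq> x \<otimes> y" using x(2) by (rule not_sym)
  then show "centralizer G {y} P \<subset> P"
    using x(1) unfolding centralizer_def by blast
qed

lemma card_commuting_pairs_le:
  assumes P: "subgroup P G" and Q: "subgroup Q G" "finite Q"
    and p: "prime p" and cP: "card P = p ^ k"
  shows "real (card {(x, y). x \<in> P \<and> y \<in> Q \<and> x \<otimes> y = y \<otimes> x})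
    \<le> real (card (centralizer G P Q)) * card P + real (card Q) * card P / p"
proof -
  let ?C = "centralizer G P Q"
  have "p > 0" "card P > 0" using p cP by (simp_all add: prime_gt_0_nat)
  then have "finite P" using card_ge_0_finite by blast
  have fibre: "real (card (centralizer G {y} P)) \<le> (if y \<in> ?C then real (card P) else 0) + card P / p"
    if y: "y \<in> Q" for y
  proof (cases "y \<in> ?C")
    case True
    then have "centralizer G {y} P = P" by (auto simp: centralizer_def)
    then show ?thesis using True by simp
  next
    case False
    then obtain x where "x \<in> P" "x \<otimes> y \<noteq> y \<otimes> x" using y by (auto simp: centralizer_def)
    then have "p * card (centralizer G {y} P) \<le> card P"
      using prime_mult_card_centralizer_le[OF P p cP subgroup.mem_carrier[OF Q(1) y]] by blast
    then show ?thesis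
      using False \<open>p > 0\<close> by (simp add: field_simps) (metis of_nat_le_iff of_nat_mult)
  qed
  have "real (card {(x, y). x \<in> P \<and> y \<in> Q \<and> x \<otimes> y = y \<otimes> x})
      = (\<Sum>y\<in>Q. real (card (centralizer G {y} P)))"
    using card_commuting_pairs[OF \<open>finite P\<close> Q(2)] by simp
  also have "\<dots> \<le> (\<Sum>y\<in>Q. (if y \<in> ?C then real (card P) else 0) + card P / p)"
    using fibre by (rule sum_mono)
  also have "\<dots> = real (card ?C) * card P + real (card Q) * card P / p"
  proof -
    have "Q \<inter> ?C = ?C" by (auto simp: centralizer_def)
    then show ?thesis using Q(2) by (simp add: sum.distrib sum.If_cases)
  qed
  finally show ?thesis .
qed

lemma commute_prob_le_inverse_index:
  assumes P: "subgroup P G" and Q: "subgroup Q G" "finite Q"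
    and p: "prime p" and cP: "card P = p ^ k"
  shows "commute_prob G P Q \<le> 1 / card (rcosets\<^bsub>G\<lparr>carrier := Q\<rparr>\<^esub> (centralizer G P Q)) + 1 / p"
proof -
  let ?C = "centralizer G P Q"
  let ?n = "card (rcosets\<^bsub>G\<lparr>carrier := Q\<rparr>\<^esub> ?C)"
  have "card P > 0" using p cP by (simp add: prime_gt_0_nat)
  have "card Q > 0" using Q(2) subgroup.one_closed[OF Q(1)] by (auto simp: card_gt_0_iff)
  have lag: "?n * card ?C = card Q"
    using subgroup_centralizer_in[OF Q(1) subgroup.subset[OF P]] by (rule lagrange_subgroup[OF Q(1)])
  have "commute_prob G P Q
      \<le> (real (card ?C) * card P + real (card Q) * card P / p) / (real (card P) * card Q)"
    unfolding commute_prob_def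
    by (rule divide_right_mono[OF card_commuting_pairs_le[OF P Q p cP]]) simp
  also have "\<dots> = card ?C / card Q + 1 / p"
    using \<open>card P > 0\<close> \<open>card Q > 0\<close> by (simp add: field_simps)
  also have "real (card ?C) / card Q = 1 / ?n"
  proof -
    have "0 < ?n * card ?C" using lag \<open>card Q > 0\<close> by simp
    then show ?thesis using lag[symmetric] by (simp add: field_simps)
  qed
  finally show ?thesis .
qed

lemma index_centralizer_less:
  assumes "subgroup P G" "subgroup Q G" "finite Q" "prime p" "card P = p ^ k"
    and "0 < \<epsilon>" "\<epsilon> \<le> commute_prob G P Q" "2 / \<epsilon> < p"
  shows "card (rcosets\<^bsub>G\<lparr>carrier := Q\<rparr>\<^esub> (centralizer G P Q)) < 2 / \<epsilon>"
proof -
  let ?n = "card (rcosets\<^bsub>G\<lparr>carrier := Q\<rparr>\<^esub> (centralizer G P Q))"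
  have "0 < real p" using assms(6,8) by (smt (verit) divide_pos_pos)
  then have "1 / p < \<epsilon> / 2" using assms(6,8) by (simp add: field_simps)
  moreover have "\<epsilon> \<le> 1 / ?n + 1 / p"
    using assms(7) commute_prob_le_inverse_index[OF assms(1-5)] by linarith
  ultimately have "\<epsilon> / 2 < 1 / ?n" by linarith
  then show ?thesis using assms(6) by (cases "?n = 0") (auto simp: field_simps)
qed

lemma commutator_eq_one_if_coprime:
  assumes P: "subgroup P G" and Q: "subgroup Q G" and cop: "coprime (card P) (card Q)"
    and x: "x \<in> P" and y: "y \<in> carrier G" and cQ: "commutator G x y \<in> Q"
    and comm: "x \<otimes> commutator G x y = commutator G x y \<otimes> x"
  shows "commutator G x y = \<one>"
proof -
  let ?c = "commutator G x y"
  have xG: "x \<in> carrier G" by (rule subgroup.mem_carrier[OF P x])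
  have cG: "?c \<in> carrier G" using xG y by simp
  have "?c [^] card P = commutator G (x [^] card P) y"
    by (rule commutator_nat_pow_left[OF xG y comm, symmetric])
  also have "\<dots> = \<one>"
    using pow_card_subgroup_eq_one[OF P x] y by (simp add: commutator_def)
  finally have "ord ?c dvd card P" by (simp add: pow_eq_id[OF cG])
  moreover have "ord ?c dvd card Q"
    using pow_card_subgroup_eq_one[OF Q cQ] by (simp add: pow_eq_id[OF cG])
  ultimately have "is_unit (ord ?c)" by (rule coprime_common_divisor[OF cop])
  then show ?thesis using ord_eq_1[OF cG] by simp
qed

lemma card_conjugates_dvd:
  assumes "subgroup P G" "y \<in> carrier G"
  shows "card ((\<lambda>x. x \<otimes> y \<otimes> inv x) ` P) dvd card P"
proof -
  let ?conj = "\<lambda>g. \<lambda>h\<in>carrier G. g \<otimes> h \<otimes> inv g"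
  interpret conj: group_action "G\<lparr>carrier := P\<rparr>" "carrier G" ?conj
    by (rule group_action.induced_action[OF action_by_conjugation assms(1)])
  have "orbit (G\<lparr>carrier := P\<rparr>) ?conj y = (\<lambda>x. x \<otimes> y \<otimes> inv x) ` P"
    using assms(2) by (auto simp: orbit_def)
  then have "card ((\<lambda>x. x \<otimes> y \<otimes> inv x) ` P) * card (stabilizer (G\<lparr>carrier := P\<rparr>) ?conj y) = card P"
    using conj.orbit_stabilizer_theorem[OF assms(2)] by (simp add: order_def)
  then show ?thesis by (rule dvdI[OF sym])
qed

lemma conjugates_eq_if_rcosets_centralizer_eq:
  assumes P: "subgroup P G" and Q: "subgroup Q G" and cop: "coprime (card P) (card Q)"
    and x1: "x1 \<in> P" and x2: "x2 \<in> P" and y: "y \<in> carrier G"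
    and eq: "centralizer G P Q #> (x1 \<otimes> y \<otimes> inv x1) = centralizer G P Q #> (x2 \<otimes> y \<otimes> inv x2)"
  shows "x1 \<otimes> y \<otimes> inv x1 = x2 \<otimes> y \<otimes> inv x2"
proof -
  let ?C = "centralizer G P Q"
  have x1G: "x1 \<in> carrier G" and x2G: "x2 \<in> carrier G"
    using subgroup.mem_carrier[OF P] x1 x2 by auto
  have sC: "subgroup ?C G" by (rule subgroup_centralizer[OF Q subgroup.subset[OF P]])
  define c where "c = x1 \<otimes> y \<otimes> inv x1 \<otimes> inv (x2 \<otimes> y \<otimes> inv x2)"
  have cG: "c \<in> carrier G" using x1G x2G y by (simp add: c_def)
  have "x1 \<otimes> y \<otimes> inv x1 \<in> ?C #> (x1 \<otimes> y \<otimes> inv x1)"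
    using x1G y by (intro rcos_self[OF _ sC]) simp
  then have "x1 \<otimes> y \<otimes> inv x1 \<in> ?C #> (x2 \<otimes> y \<otimes> inv x2)"
    by (simp only: eq)
  then have cC: "c \<in> ?C"
    unfolding c_def using x2G y by (intro subgroup.rcos_module_imp[OF sC is_group]) simp_all
  let ?x = "inv x2 \<otimes> x1"
  have xP: "?x \<in> P" using P x1 x2 by (simp add: subgroup.m_closed subgroup.m_inv_closed)
  have "x2 \<otimes> c = c \<otimes> x2" using cC x2 by (simp add: centralizer_def)
  have "commutator G ?x y = inv x2 \<otimes> c \<otimes> x2"
    using x1G x2G y by (simp add: c_def commutator_def m_assoc inv_mult_group)
  also have "\<dots> = inv x2 \<otimes> (x2 \<otimes> c)"
    using x2G cG by (simp add: m_assoc \<open>x2 \<otimes> c = c \<otimes> x2\<close>)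
  also have "\<dots> = c"
    using x2G cG by simp
  finally have "commutator G ?x y = c" .
  moreover have "c \<in> Q" "?x \<otimes> c = c \<otimes> ?x" using cC xP by (auto simp: centralizer_def)
  ultimately have "c = \<one>"
    using commutator_eq_one_if_coprime[OF P Q cop xP y] by simp
  moreover have "x1 \<otimes> y \<otimes> inv x1 = c \<otimes> (x2 \<otimes> y \<otimes> inv x2)"
    using x1G x2G y by (simp add: c_def m_assoc)
  ultimately show ?thesis using x2G y by simp
qed

lemma centralizer_eq_if_index_less:
  assumes P: "subgroup P G" and Q: "subgroup Q G" "finite Q"
    and p: "prime p" and cP: "card P = p ^ k" and cop: "coprime (card P) (card Q)"
    and normal: "normalizes G P Q"
    and small: "card (rcosets\<^bsub>G\<lparr>carrier := Q\<rparr>\<^esub> (centralizer G P Q)) < p"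
  shows "centralizer G P Q = Q"
proof -
  let ?C = "centralizer G P Q"
  have "y \<in> ?C" if y: "y \<in> Q" for y
  proof -
    let ?conj = "\<lambda>x. x \<otimes> y \<otimes> inv x"
    have yG: "y \<in> carrier G" by (rule subgroup.mem_carrier[OF Q(1) y])
    have "inj_on (\<lambda>z. ?C #> z) (?conj ` P)"
      using conjugates_eq_if_rcosets_centralizer_eq[OF P Q(1) cop _ _ yG] by (auto intro: inj_onI)
    moreover have "(\<lambda>z. ?C #> z) ` ?conj ` P \<subseteq> rcosets\<^bsub>G\<lparr>carrier := Q\<rparr>\<^esub> ?C"
      using normalizesD[OF normal] y by (auto simp: RCOSETS_def r_coset_def)
    moreover have "finite (rcosets\<^bsub>G\<lparr>carrier := Q\<rparr>\<^esub> ?C)"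
      using Q(2) by (simp add: RCOSETS_def)
    ultimately have "card (?conj ` P) \<le> card (rcosets\<^bsub>G\<lparr>carrier := Q\<rparr>\<^esub> ?C)"
      by (rule card_inj_on_le)
    then have "card (?conj ` P) < p" using small by linarith
    moreover have "card (?conj ` P) dvd p ^ k"
      using card_conjugates_dvd[OF P yG] cP by simp
    ultimately have "card (?conj ` P) = 1"
      using prime_le_of_dvd_prime_power[OF p] by (meson not_le)
    moreover have "y \<in> ?conj ` P"
      using yG subgroup.one_closed[OF P] by (auto intro!: image_eqI[of _ _ \<one>])
    ultimately have conj_y: "?conj ` P = {y}" by (metis card_1_singletonE singletonD)
    have "x \<otimes> y = y \<otimes> x" if "x \<in> P" for x
    proof -
      have "x \<otimes> y \<otimes> inv x = y" using conj_y that by blast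
      then have "x \<otimes> y \<otimes> inv x \<otimes> x = y \<otimes> x" by simp
      then show ?thesis using subgroup.mem_carrier[OF P that] yG by (simp add: m_assoc)
    qed
    then show ?thesis using y by (simp add: centralizer_def)
  qed
  then show ?thesis by (auto simp: centralizer_def)
qed

lemma rcosets_action_hom:
  assumes H: "subgroup H G"
  shows "group_hom G (BijGroup (rcosets H)) (\<lambda>g. \<lambda>X\<in>rcosets H. X #> inv g)"
proof -
  let ?R = "rcosets H"
  let ?\<phi> = "\<lambda>g. \<lambda>X\<in>?R. X #> inv g"
  have R_carrier: "X \<subseteq> carrier G" if "X \<in> ?R" for X
    using that rcosets_part_G[OF H] by blast
  have R_closed: "X #> g \<in> ?R" if X: "X \<in> ?R" and g: "g \<in> carrier G" for X g
  proof -
    obtain a where a: "a \<in> carrier G" "X = H #> a" using X by (auto simp: RCOSETS_def)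
    then have "X #> g = H #> (a \<otimes> g)"
      using g subgroup.subset[OF H] by (simp add: coset_mult_assoc)
    then show ?thesis using a g by (simp add: rcosetsI subgroup.subset[OF H])
  qed
  have Bij: "?\<phi> g \<in> Bij ?R" if g: "g \<in> carrier G" for g
  proof -
    have "bij_betw (?\<phi> g) ?R ?R"
      by (rule bij_betw_byWitness[where f'="\<lambda>X. X #> g"])
         (use g R_closed R_carrier in \<open>auto simp: coset_mult_assoc\<close>)
    then show ?thesis by (simp add: Bij_def)
  qed
  have mult: "?\<phi> (g \<otimes> h) = compose ?R (?\<phi> g) (?\<phi> h)"
    if g: "g \<in> carrier G" and h: "h \<in> carrier G" for g h
    using g h R_closed R_carrier
    by (auto simp: compose_def coset_mult_assoc inv_mult_group fun_eq_iff)
  show ?thesis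
  proof (intro group_hom.intro group_hom_axioms.intro homI)
    show "group G" "group (BijGroup ?R)" by (rule is_group, rule group_BijGroup)
    show "?\<phi> g \<in> carrier (BijGroup ?R)" if "g \<in> carrier G" for g
      using Bij that by (simp add: BijGroup_def)
    show "?\<phi> (g \<otimes> h) = ?\<phi> g \<otimes>\<^bsub>BijGroup ?R\<^esub> ?\<phi> h"
      if "g \<in> carrier G" "h \<in> carrier G" for g h
      using Bij mult that by (simp add: BijGroup_def)
  qed
qed

lemma normal_subgroup_index_le_fact:
  assumes fin: "finite (carrier G)" and H: "subgroup H G"
  shows "\<exists>K. K \<lhd> G \<and> K \<subseteq> H \<and> order G div card K \<le> fact (card (rcosets H))"
proof -
  let ?R = "rcosets H"
  let ?\<phi> = "\<lambda>g. \<lambda>X\<in>?R. X #> inv g"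
  interpret \<phi>: group_hom G "BijGroup ?R" ?\<phi>
    using rcosets_action_hom[OF H] .
  let ?K = "kernel G (BijGroup ?R) ?\<phi>"
  have fin_R: "finite ?R" using finite_subset[OF rcosets_subset_PowG[OF H]] fin by simp
  have "?K \<subseteq> H"
  proof
    fix g assume "g \<in> ?K"
    then have g: "g \<in> carrier G" and fix_all: "?\<phi> g = (\<lambda>X\<in>?R. X)"
      by (auto simp: kernel_def BijGroup_def)
    have "H \<in> ?R" using subgroup.subset[OF H] by (metis coset_mult_one one_closed rcosetsI)
    then have "H #> inv g = H" using fun_cong[OF fix_all, of H] by simp
    then have "inv g \<in> H" using coset_join1 H g by blast
    then show "g \<in> H" using H g by (metis inv_inv subgroup.m_inv_closed)
  qed
  moreover have "card (rcosets ?K) \<le> card (Bij ?R)"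
  proof (rule card_inj_on_le)
    show "inj_on (\<lambda>X. the_elem (?\<phi> ` X)) (rcosets ?K)"
      using \<phi>.FactGroup_inj_on by (simp add: FactGroup_def)
    show "(\<lambda>X. the_elem (?\<phi> ` X)) ` (rcosets ?K) \<subseteq> Bij ?R"
      using \<phi>.FactGroup_the_elem_mem by (auto simp: FactGroup_def BijGroup_def)
    have "Bij ?R \<subseteq> ?R \<rightarrow>\<^sub>E ?R" by (auto simp: Bij_def bij_betw_def PiE_def)
    then show "finite (Bij ?R)" using fin_R by (meson finite_PiE finite_subset)
  qed
  moreover have "order G div card ?K = card (rcosets ?K)"
  proof -
    have "card (rcosets ?K) * card ?K = order G" by (rule lagrange[OF \<phi>.subgroup_kernel])
    moreover have "0 < card ?K" by (rule subgroup.finite_imp_card_positive[OF \<phi>.subgroup_kernel fin])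
    ultimately show ?thesis by (metis div_mult_self_is_m)
  qed
  ultimately have "order G div card ?K \<le> fact (card ?R)"
    using card_Bij_le_fact[OF fin_R] by linarith
  then show ?thesis using \<phi>.normal_kernel \<open>?K \<subseteq> H\<close> by blast
qed

lemma comm_subgroup_eq_one:
  assumes "P \<subseteq> carrier G" "H \<subseteq> carrier G" "K \<subseteq> centralizer G P H"
  shows "comm_subgroup G P K = {\<one>}"
proof -
  have "x \<otimes> y \<otimes> inv x \<otimes> inv y = \<one>" if "x \<in> P" "y \<in> K" for x y
  proof -
    have "x \<in> carrier G" "y \<in> carrier G" "x \<otimes> y = y \<otimes> x"
      using that assms by (auto simp: centralizer_def)
    then show ?thesis using commutator_eq_one_iff unfolding commutator_def by blast
  qed
  then have "{x \<otimes> y \<otimes> inv x \<otimes> inv y | x y. x \<in> P \<and> y \<in> K} \<subseteq> {\<one>}" by blast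
  then have "comm_subgroup G P K \<subseteq> {\<one>}"
    unfolding comm_subgroup_def by (rule generate_subgroup_incl[OF _ triv_subgroup])
  then show ?thesis
    unfolding comm_subgroup_def using generate.one by blast
qed

end

theorem lemma2p10:
  fixes G :: "('a, 'b) monoid_scheme" and P Q :: "'a set" and p q :: nat and \<epsilon> :: real
  assumes "group G" and "finite (carrier G)"
    and "prime p" and "prime q" and "p \<noteq> q"
    and "p_subgroup G p P" and "p_subgroup G q Q"
    and "\<epsilon> > 0" and "commute_prob G P Q \<ge> \<epsilon>"
  shows "(normalizes G P Q \<and> real p > (2 / \<epsilon>) powr (6 / \<epsilon>)
            \<longrightarrow> comm_subgroup G P Q = {\<one>\<^bsub>G\<^esub>})
       \<and> (real p > (2 / \<epsilon>) powr (6 / \<epsilon>)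
            \<longrightarrow> (\<exists>Q0. Q0 \<lhd> G\<lparr>carrier := Q\<rparr>
                   \<and> card Q div card Q0 \<le> fact (nat \<lfloor>2 / \<epsilon>\<rfloor>)
                   \<and> comm_subgroup G P Q0 = {\<one>\<^bsub>G\<^esub>}))"
proof -
  interpret group G by fact
  obtain k where P: "subgroup P G" and cP: "card P = p ^ k"
    using assms(6) by (auto simp: p_subgroup_def)
  obtain m where Q: "subgroup Q G" and cQ: "card Q = q ^ m"
    using assms(7) by (auto simp: p_subgroup_def)
  have fin: "finite P" "finite Q"
    using finite_subset[OF subgroup.subset[OF P] assms(2)] finite_subset[OF subgroup.subset[OF Q] assms(2)] .
  let ?C = "centralizer G P Q"
  let ?n = "card (rcosets\<^bsub>G\<lparr>carrier := Q\<rparr>\<^esub> ?C)"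
  have p_gt: "2 / \<epsilon> < p" and index_lt: "?n < 2 / \<epsilon>" if "(2 / \<epsilon>) powr (6 / \<epsilon>) < p"
  proof -
    have "\<epsilon> \<le> 1" using assms(9) commute_prob_le_one[where G = G, OF fin] by linarith
    then have "2 / \<epsilon> \<le> (2 / \<epsilon>) powr (6 / \<epsilon>)"
      using assms(8) powr_mono[of 1 "6 / \<epsilon>" "2 / \<epsilon>"] by simp
    then show "2 / \<epsilon> < p" using that by linarith
    then show "?n < 2 / \<epsilon>" by (rule index_centralizer_less[OF P Q fin(2) assms(3) cP assms(8,9)])
  qed
  show ?thesis
  proof (intro conjI impI)
    assume part1: "normalizes G P Q \<and> (2 / \<epsilon>) powr (6 / \<epsilon>) < p"
    have "real ?n < real p" using p_gt index_lt part1 by fastforce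
    moreover have "coprime (card P) (card Q)" using cP cQ primes_coprime[OF assms(3-5)] by simp
    ultimately have "?C = Q"
      using part1 by (intro centralizer_eq_if_index_less[OF P Q fin(2) assms(3) cP]) simp_all
    then show "comm_subgroup G P Q = {\<one>\<^bsub>G\<^esub>}"
      using comm_subgroup_eq_one[OF subgroup.subset[OF P] subgroup.subset[OF Q]] by simp
  next
    assume part2: "(2 / \<epsilon>) powr (6 / \<epsilon>) < p"
    interpret Q: group "G\<lparr>carrier := Q\<rparr>" using subgroup_imp_group[OF Q] .
    obtain K where K: "K \<lhd> G\<lparr>carrier := Q\<rparr>" "K \<subseteq> ?C" and "card Q div card K \<le> fact ?n"
      using Q.normal_subgroup_index_le_fact subgroup_centralizer_in[OF Q subgroup.subset[OF P]] fin(2)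
      by (auto simp: order_def)
    moreover have "fact ?n \<le> (fact (nat \<lfloor>2 / \<epsilon>\<rfloor>) :: nat)"
      using index_lt[OF part2] by (intro fact_mono le_nat_floor) simp
    ultimately show "\<exists>Q0. Q0 \<lhd> G\<lparr>carrier := Q\<rparr> \<and> card Q div card Q0 \<le> fact (nat \<lfloor>2 / \<epsilon>\<rfloor>)
        \<and> comm_subgroup G P Q0 = {\<one>\<^bsub>G\<^esub>}"
      using comm_subgroup_eq_one[OF subgroup.subset[OF P] subgroup.subset[OF Q] K(2)] by (meson le_trans)
  qed
qed

end
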